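(* Let $\Delta>\delta\geq 1$ be integers, and let $G$ be a graph with $n$ vertices, $m$ edges, maximum degree at most $\Delta$, and minimum degree at least $\delta$. If $\frac{2m}{n}\in\left[\delta,\ \frac{2\Delta\delta}{\Delta+\delta}\right]$, then $$irr(G)\leq 2\Delta m-\delta\Delta n.$$
   Context: All graphs are finite, simple and undirected. For a graph $G$ with edge set $E(G)$ and vertex degrees $d_G(u)$, the irregularity (in the sense of Albertson) is $irr(G)=\sum_{uv\in E(G)}|d_G(u)-d_G(v)|$. *)

theory Defs
  imports Main "HOL-Library.Disjoint_Sets" Complex_Main
begin

definition simple_graph :: "'a set \<Rightarrow> 'a set set \<Rightarrow> bool" where
  "simple_graph V E \<longleftrightarrow> finite V \<and> (\<forall>e\<in>E. e \<subseteq> V \<and> card e = 2)"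

definition degree :: "'a set set \<Rightarrow> 'a \<Rightarrow> nat" where
  "degree E v = card {e\<in>E. v \<in> e}"

definition irr :: "'a set \<Rightarrow> 'a set set \<Rightarrow> int" where
  "irr V E = (\<Sum>e\<in>E. THE k. \<exists>u v. e = {u, v} \<and> k = \<bar>int (degree E u) - int (degree E v)\<bar>)"

end

theory Submission
  imports Defs
begin

text \<open>Charge each edge \<open>uv\<close> to its endpoints, vertex \<open>w\<close> receiving
  \<open>\<Delta> (d(w) - \<delta>) / d(w)\<close>; these two charges dominate \<open>|d(u) - d(v)|\<close>.
  Vertex \<open>w\<close> lies on \<open>d(w)\<close> edges, so its total charge is \<open>\<Delta> (d(w) - \<delta>)\<close>,
  and summing over the vertices with the handshake lemma gives \<open>\<Delta> (2m - \<delta> n)\<close>.\<close>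

lemma the_abs_diff_doubleton:
  "(THE k. \<exists>u v. {x, y} = {u, v} \<and> k = \<bar>f u - f v\<bar>) = \<bar>f x - f y :: int\<bar>"
proof (rule the_equality)
  fix k assume "\<exists>u v. {x, y} = {u, v} \<and> k = \<bar>f u - f v\<bar>"
  then show "k = \<bar>f x - f y\<bar>"
    by (auto simp: doubleton_eq_iff abs_minus_commute)
qed blast

lemma excess_le_scaled_excess:
  fixes a d D :: real
  assumes "0 < d" "d \<le> a" "a \<le> D"
  shows "a - d \<le> D * (a - d) / a"
proof -
  have "a * (a - d) \<le> D * (a - d)"
    using assms by (intro mult_right_mono) auto
  then show ?thesis
    using assms by (simp add: pos_le_divide_eq mult.commute)
qed

lemma abs_diff_le_scaled_excess_sum:
  fixes a b d D :: real
  assumes "0 < d" "d \<le> a" "a \<le> D" "d \<le> b" "b \<le> D"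
  shows "\<bar>a - b\<bar> \<le> D * (a - d) / a + D * (b - d) / b"
proof -
  have "0 \<le> D * (a - d) / a" "0 \<le> D * (b - d) / b"
    using assms by auto
  with excess_le_scaled_excess[of d a D] excess_le_scaled_excess[of d b D] assms
  show ?thesis by (auto simp: abs_if)
qed

lemma simple_graph_finite_edges:
  assumes "simple_graph V E"
  shows "finite E"
proof (rule finite_subset)
  show "E \<subseteq> Pow V" using assms by (auto simp: simple_graph_def)
  show "finite (Pow V)" using assms by (simp add: simple_graph_def)
qed

lemma sum_edges_sum_endpoints:
  fixes g :: "'a \<Rightarrow> 'b::comm_semiring_1"
  assumes "simple_graph V E"
  shows "(\<Sum>e\<in>E. \<Sum>v\<in>e. g v) = (\<Sum>v\<in>V. of_nat (degree E v) * g v)"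
proof -
  have fV: "finite V" and EV: "\<And>e. e \<in> E \<Longrightarrow> e \<subseteq> V"
    using assms by (auto simp: simple_graph_def)
  have "(\<Sum>e\<in>E. \<Sum>v\<in>e. g v) = (\<Sum>e\<in>E. \<Sum>v\<in>{v\<in>V. v \<in> e}. g v)"
    by (rule sum.cong) (use EV in \<open>auto intro!: sum.cong\<close>)
  also have "\<dots> = (\<Sum>v\<in>V. \<Sum>e\<in>{e\<in>E. v \<in> e}. g v)"
    by (rule sum.swap_restrict[OF simple_graph_finite_edges[OF assms] fV])
  also have "\<dots> = (\<Sum>v\<in>V. of_nat (degree E v) * g v)"
    by (simp add: degree_def)
  finally show ?thesis .
qed

lemma sum_degree:
  assumes "simple_graph V E"
  shows "(\<Sum>v\<in>V. degree E v) = 2 * card E"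
proof -
  have "(\<Sum>v\<in>V. degree E v) = (\<Sum>e\<in>E. \<Sum>v\<in>e. 1::nat)"
    using sum_edges_sum_endpoints[OF assms, of "\<lambda>_. 1::nat"] by simp
  also have "\<dots> = (\<Sum>e\<in>E. 2)"
    using assms by (intro sum.cong) (auto simp: simple_graph_def)
  finally show ?thesis by simp
qed

lemma irr_le_max_degree_times_excess:
  assumes G: "simple_graph V E" and "0 < \<delta>"
    and deg: "\<forall>v\<in>V. \<delta> \<le> degree E v \<and> degree E v \<le> \<Delta>"
  shows "irr V E \<le> int \<Delta> * (2 * int (card E) - int \<delta> * int (card V))"
proof -
  define charge where "charge w = real \<Delta> * (real (degree E w) - real \<delta>) / real (degree E w)" for w
  have "real_of_int (irr V E) \<le> (\<Sum>e\<in>E. \<Sum>v\<in>e. charge v)"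
    unfolding irr_def of_int_sum
  proof (rule sum_mono)
    fix e assume e: "e \<in> E"
    with G obtain u v where uv: "e = {u, v}" "u \<noteq> v" "u \<in> V" "v \<in> V"
      by (auto simp: simple_graph_def card_2_iff)
    have "\<bar>real (degree E u) - real (degree E v)\<bar> \<le> charge u + charge v"
      unfolding charge_def
      by (rule abs_diff_le_scaled_excess_sum) (use assms uv in auto)
    then show "real_of_int (THE k. \<exists>u v. e = {u, v} \<and> k = \<bar>int (degree E u) - int (degree E v)\<bar>)
        \<le> (\<Sum>v\<in>e. charge v)"
      using uv by (simp add: the_abs_diff_doubleton)
  qed
  also have "\<dots> = (\<Sum>v\<in>V. real \<Delta> * (real (degree E v) - real \<delta>))"
    unfolding sum_edges_sum_endpoints[OF G] charge_def
    using assms by (intro sum.cong) auto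
  also have "\<dots> = real \<Delta> * (real (\<Sum>v\<in>V. degree E v) - real \<delta> * real (card V))"
    by (simp add: sum_distrib_left[symmetric] sum_subtractf)
  finally have "real_of_int (irr V E)
      \<le> real_of_int (int \<Delta> * (2 * int (card E) - int \<delta> * int (card V)))"
    unfolding sum_degree[OF G] by simp
  then show ?thesis by linarith
qed

theorem proposition2:
  fixes V :: "'a set" and E :: "'a set set" and \<Delta> \<delta> :: nat
  assumes "simple_graph V E"
    and "V \<noteq> {}"
    and "1 \<le> \<delta>" and "\<delta> < \<Delta>"
    and "\<forall>v\<in>V. degree E v \<le> \<Delta>"
    and "\<forall>v\<in>V. \<delta> \<le> degree E v"
    and "real \<delta> \<le> 2 * real (card E) / real (card V)"
    and "2 * real (card E) / real (card V) \<le> 2 * real \<Delta> * real \<delta> / (real \<Delta> + real \<delta>)"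
  shows "irr V E \<le> 2 * int \<Delta> * int (card E) - int \<delta> * int \<Delta> * int (card V)"
proof -
  have "irr V E \<le> int \<Delta> * (2 * int (card E) - int \<delta> * int (card V))"
    using irr_le_max_degree_times_excess[of V E \<delta> \<Delta>] assms(1,3,5,6) by auto
  then show ?thesis by (simp add: algebra_simps)
qed

end
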